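(* Let $m$ be a positive integer and $n=m(m+1)/2$. Write $\prod_{i=1}^m(1-X^i)=\sum_{i=0}^n c_iX^i$. Then the matrix $\mathsf P$ with rows indexed by integers $k\ge0$, columns indexed by non-empty subsets $S\subseteq[1,m]$, and $(k,S)$ entry $p(k,S)$, has rank $n$ over $\mathbb{Q}$. Moreover, for all $k\ge n$ and all non-empty $S\subseteq[1,m]$, $$p(k,S)=-\sum_{j=k-n}^{k-1}c_{k-j}\,p(j,S).$$
   Context: For $S\subseteq\mathbb{N}$ and $k\in\mathbb{Z}$, $p(k,S)$ is the number of partitions of $k$ all of whose parts lie in $S$ ($p(0,S)=1$). $[1,m]=\{1,\dots,m\}$. *)

theory Defs
  imports Main "HOL-Library.Multiset" "HOL-Library.Function_Algebras"
    "HOL-Computational_Algebra.Polynomial"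
begin

definition part_count :: "nat \<Rightarrow> nat set \<Rightarrow> nat" where
  "part_count k S = card {M :: nat multiset. set_mset M \<subseteq> S \<and> sum_mset M = k}"

(* the column of the matrix P indexed by S, as a vector in Q^N (rows k >= 0) *)
definition P_column :: "nat set \<Rightarrow> (nat \<Rightarrow> rat)" where
  "P_column S = (\<lambda>k. of_nat (part_count k S))"

definition qscale :: "rat \<Rightarrow> (nat \<Rightarrow> rat) \<Rightarrow> (nat \<Rightarrow> rat)" where
  "qscale c f = (\<lambda>k. c * f k)"

definition P_rank :: "nat \<Rightarrow> nat" where
  "P_rank m = vector_space.dim qscale {P_column S | S. S \<subseteq> {1..m} \<and> S \<noteq> {}}"

definition cpoly :: "nat \<Rightarrow> int poly" where
  "cpoly m = (\<Prod>i\<in>{1..m}. 1 - monom 1 i)"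

end

theory Submission imports Defs "HOL-Computational_Algebra.Computational_Algebra" begin

(* For a finite set T of positive integers put Q_T = prod_{i in T} (1 - X^i).
   Euler's product formula says that the generating function of p(-,S) is 1/Q_S.  Hence,
   with D = Q_[1,m] (a polynomial of degree n with constant term 1),
     D * sum_k p(k,S) X^k = Q_([1,m]-S),
   a polynomial of degree < n whenever S is non-empty.  Comparing coefficients of X^k for
   k >= n gives the recurrence.  For the rank, multiplication by the invertible series 1/D is
   an injective linear map on Q^N sending the coefficient sequence of Q_T to the column of
   S = [1,m]-T; so the rank equals the dimension of the span of {Q_T | T proper subset of
   [1,m]}.  This span is exactly the space of polynomials of degree < n: every Q_T has
   degree sum T < n, and conversely X^d (d < n) is obtained from the identity
   X^(e+s) = X^e - (1 - X^s) X^e by induction on m. *)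

section \<open>Partitions with parts in a set and their generating function\<close>

definition partitions_in :: "nat \<Rightarrow> nat set \<Rightarrow> nat multiset set" where
  "partitions_in k S = {M. set_mset M \<subseteq> S \<and> sum_mset M = k}"

lemma part_count_eq_card: "part_count k S = card (partitions_in k S)"
  unfolding part_count_def partitions_in_def ..

lemma size_le_sum_mset: "0 \<notin># M \<Longrightarrow> size M \<le> sum_mset (M :: nat multiset)"
  by (induction M) auto

lemma finite_partitions_in:
  assumes "finite S" "0 \<notin> S"
  shows "finite (partitions_in k S)"
proof (rule finite_subset)
  show "partitions_in k S \<subseteq> (\<Union>n\<in>{..k}. multisets_of_size S n)"
  proof
    fix M assume M: "M \<in> partitions_in k S"
    then have "set_mset M \<subseteq> S" "size M \<le> k"
      using assms(2) size_le_sum_mset[of M] unfolding partitions_in_def by auto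
    then show "M \<in> (\<Union>n\<in>{..k}. multisets_of_size S n)"
      unfolding multisets_of_size_def by blast
  qed
  show "finite (\<Union>n\<in>{..k}. multisets_of_size S n)"
    using assms(1) by auto
qed

lemma part_count_empty: "part_count k {} = (if k = 0 then 1 else 0)"
proof -
  have "partitions_in k {} = (if k = 0 then {{#}} else {})"
    unfolding partitions_in_def by auto
  then show ?thesis by (simp add: part_count_eq_card)
qed

lemma partitions_using_part:
  assumes "s \<in> T"
  shows "{M \<in> partitions_in k T. s \<in># M} =
           (if s \<le> k then add_mset s ` partitions_in (k - s) T else {})"
proof (intro equalityI subsetI)
  fix M assume "M \<in> {M \<in> partitions_in k T. s \<in># M}"
  then obtain M' where M: "M = add_mset s M'" "M \<in> partitions_in k T"
    by (auto dest: multi_member_split)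
  then have "s \<le> k" "M' \<in> partitions_in (k - s) T"
    unfolding partitions_in_def by auto
  with M(1) show "M \<in> (if s \<le> k then add_mset s ` partitions_in (k - s) T else {})"
    by simp
next
  fix M assume "M \<in> (if s \<le> k then add_mset s ` partitions_in (k - s) T else {})"
  then show "M \<in> {M \<in> partitions_in k T. s \<in># M}"
    using assms unfolding partitions_in_def by (auto split: if_splits)
qed

lemma part_count_insert:
  assumes "finite S" "0 \<notin> S" "s \<notin> S" "s > 0"
  shows "part_count k (insert s S) =
           part_count k S + (if s \<le> k then part_count (k - s) (insert s S) else 0)"
proof -
  let ?T = "insert s S"
  have fin: "finite (partitions_in k ?T)" using assms by (intro finite_partitions_in) auto
  have without_s: "{M \<in> partitions_in k ?T. s \<notin># M} = partitions_in k S"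
    using assms(3) unfolding partitions_in_def by auto
  have "card (partitions_in k ?T) =
          card {M \<in> partitions_in k ?T. s \<notin># M} + card {M \<in> partitions_in k ?T. s \<in># M}"
    using fin by (subst card_Un_disjoint[symmetric]) (auto intro: arg_cong[where f = card])
  also have "card {M \<in> partitions_in k ?T. s \<in># M} =
               (if s \<le> k then card (partitions_in (k - s) ?T) else 0)"
    unfolding partitions_using_part[OF insertI1] by (auto intro!: card_image inj_onI)
  finally show ?thesis unfolding part_count_eq_card without_s .
qed

definition partition_fps :: "nat set \<Rightarrow> 'a::comm_ring_1 fps" where
  "partition_fps S = Abs_fps (\<lambda>k. of_nat (part_count k S))"

definition euler_prod :: "nat set \<Rightarrow> 'a::comm_ring_1 fps" where
  "euler_prod T = (\<Prod>i\<in>T. 1 - fps_X ^ i)"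

lemma partition_fps_insert:
  assumes "finite S" "0 \<notin> S" "s \<notin> S" "s > 0"
  shows "(1 - fps_X ^ s) * partition_fps (insert s S) = (partition_fps S :: 'a::comm_ring_1 fps)"
  using part_count_insert[OF assms]
  by (intro fps_ext) (simp add: partition_fps_def algebra_simps fps_X_power_mult_nth)

lemma euler_prod_partition_fps:
  assumes "finite S" "0 \<notin> S"
  shows "euler_prod S * partition_fps S = (1 :: 'a::comm_ring_1 fps)"
  using assms
proof (induction S rule: finite_induct)
  case empty
  show ?case by (simp add: euler_prod_def partition_fps_def part_count_empty fps_eq_iff)
next
  case (insert s S)
  have "euler_prod (insert s S) * partition_fps (insert s S) =
          euler_prod S * ((1 - fps_X ^ s) * partition_fps (insert s S) :: 'a fps)"
    using insert by (simp add: euler_prod_def mult_ac)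
  also have "\<dots> = euler_prod S * partition_fps S"
    using insert by (subst partition_fps_insert) auto
  finally show ?case using insert by simp
qed

lemma euler_prod_insert_nth:
  assumes "finite T" "s \<notin> T"
  shows "(euler_prod (insert s T) :: 'a::comm_ring_1 fps) $ k =
           euler_prod T $ k - (if s \<le> k then euler_prod T $ (k - s) else 0)"
  using assms by (simp add: euler_prod_def left_diff_distrib fps_X_power_mult_nth)

lemma euler_prod_nth_above_sum:
  assumes "finite T" "k > \<Sum>T"
  shows "(euler_prod T :: 'a::comm_ring_1 fps) $ k = 0"
  using assms
proof (induction T arbitrary: k rule: finite_induct)
  case empty
  then show ?case by (simp add: euler_prod_def)
next
  case (insert s T)
  then show ?case
    using insert.IH[of k] insert.IH[of "k - s"] by (simp add: euler_prod_insert_nth)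
qed

lemma euler_prod_nth_0:
  assumes "finite T" "0 \<notin> T"
  shows "(euler_prod T :: 'a::comm_ring_1 fps) $ 0 = 1"
  using assms by (induction T rule: finite_induct) (simp_all add: euler_prod_insert_nth euler_prod_def)

lemma euler_prod_times_partition_fps:
  assumes "S \<subseteq> {1..m}"
  shows "euler_prod {1..m} * partition_fps S = (euler_prod ({1..m} - S) :: 'a::comm_ring_1 fps)"
proof -
  have "euler_prod {1..m} = (euler_prod ({1..m} - S) :: 'a fps) * euler_prod S"
    unfolding euler_prod_def using assms by (rule prod.subset_diff) simp
  moreover have "euler_prod S * partition_fps S = (1 :: 'a fps)"
    using assms by (intro euler_prod_partition_fps) (auto intro: finite_subset)
  ultimately show ?thesis by (simp add: mult.assoc)
qed

lemma triangle_Suc: "Suc m * (Suc m + 1) div 2 = m * (m + 1) div 2 + Suc m"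
proof -
  have "Suc m * (Suc m + 1) = m * (m + 1) + 2 * Suc m" by (simp add: algebra_simps)
  then show ?thesis by simp
qed

lemma triangle_ge: "(m::nat) \<le> m * (m + 1) div 2"
proof -
  have "m * 2 \<le> m * (m + 1)" by (cases m) simp_all
  then have "m * 2 div 2 \<le> m * (m + 1) div 2" by (rule div_le_mono)
  then show ?thesis by simp
qed

text \<open>Removing a non-empty S from [1,m] drops the sum below n = m(m+1)/2, so Q_([1,m]-S)
  has degree < n.\<close>
lemma sum_complement_lt:
  fixes m :: nat
  assumes "S \<subseteq> {1..m}" "S \<noteq> {}"
  shows "\<Sum>({1..m} - S) < m * (m + 1) div 2"
proof -
  obtain x where x: "x \<in> S" using assms(2) by blast
  have fin: "finite S" using assms(1) finite_subset by blast
  have "\<Sum>{1..m} = \<Sum>({1..m} - S) + \<Sum>S"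
    using assms(1) by (subst sum.subset_diff[of S]) auto
  moreover have "x \<le> \<Sum>S" using member_le_sum[of x S "\<lambda>y. y"] x fin by simp
  moreover have "1 \<le> x" using x assms(1) by auto
  moreover have "\<Sum>{1..m} = m * (m + 1) div 2" by (simp add: Sum_Icc_nat)
  ultimately show ?thesis by linarith
qed

text \<open>The c_i of the theorem are the coefficients of Q_[1,m].\<close>
lemma coeff_cpoly: "coeff (cpoly m) i = (euler_prod {1..m} :: int fps) $ i"
proof -
  have "fps_of_poly (cpoly m) = (euler_prod {1..m} :: int fps)"
    by (simp add: cpoly_def euler_prod_def fps_of_poly_prod fps_of_poly_diff fps_of_poly_monom')
  then show ?thesis by (metis fps_of_poly_nth)
qed

section \<open>The linear recurrence\<close>

text \<open>For k \<ge> n the coefficient of X^k in Q_[1,m] P_S = Q_([1,m]-S) vanishes; since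
  c_0 = 1 and c_i = 0 for i > n, this is the claimed recurrence.\<close>
lemma partition_recurrence:
  assumes "m > 0" "n = m * (m + 1) div 2" "k \<ge> n" "S \<subseteq> {1..m}" "S \<noteq> {}"
  shows "int (part_count k S) =
           - (\<Sum>j = k - n..k - 1. coeff (cpoly m) (k - j) * int (part_count j S))"
proof -
  define c where "c = (\<lambda>i. (euler_prod {1..m} :: int fps) $ i)"
  define p where "p = (\<lambda>j. int (part_count j S))"
  have n_pos: "n \<ge> 1" using assms(1,2) triangle_ge[of m] by linarith
  have c0: "c 0 = 1" unfolding c_def by (rule euler_prod_nth_0) auto
  have c_vanish: "c i = 0" if "i > n" for i
    unfolding c_def using that assms(2)
    by (intro euler_prod_nth_above_sum) (auto simp: Sum_Icc_nat)
  have "(\<Sum>i=0..k. c i * p (k - i)) = (euler_prod {1..m} * partition_fps S :: int fps) $ k"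
    by (simp add: fps_mult_nth c_def p_def partition_fps_def)
  also have "\<dots> = (euler_prod ({1..m} - S) :: int fps) $ k"
    by (simp only: euler_prod_times_partition_fps[OF assms(4)])
  also have "\<dots> = 0"
    using sum_complement_lt[OF assms(4,5)] assms(2,3) by (intro euler_prod_nth_above_sum) auto
  finally have "(\<Sum>i=0..k. c i * p (k - i)) = 0" .
  moreover have "(\<Sum>i=0..k. c i * p (k - i)) = (\<Sum>i=0..n. c i * p (k - i))"
    using assms(3) c_vanish by (intro sum.mono_neutral_right) auto
  moreover have "(\<Sum>i=0..n. c i * p (k - i)) = c 0 * p k + (\<Sum>i=1..n. c i * p (k - i))"
    by (subst sum.atLeast_Suc_atMost) auto
  moreover have "(\<Sum>i=1..n. c i * p (k - i)) = (\<Sum>j = k - n..k - 1. c (k - j) * p j)"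
    using assms(3) n_pos
    by (intro sum.reindex_bij_witness[of _ "\<lambda>j. k - j" "\<lambda>i. k - i"]) auto
  ultimately have "p k = - (\<Sum>j = k - n..k - 1. c (k - j) * p j)" using c0 by simp
  then show ?thesis unfolding p_def c_def coeff_cpoly .
qed

section \<open>Linear algebra on Q^N\<close>

interpretation Q: vector_space qscale
  by unfold_locales (auto simp: qscale_def fun_eq_iff algebra_simps)

definition seq_mult :: "rat fps \<Rightarrow> (nat \<Rightarrow> rat) \<Rightarrow> (nat \<Rightarrow> rat)" where
  "seq_mult p f = fps_nth (p * Abs_fps f)"

lemma linear_seq_mult: "Vector_Spaces.linear qscale qscale (seq_mult p)"
proof -
  have add: "seq_mult p (f + g) = seq_mult p f + seq_mult p g" for f g
  proof -
    have "Abs_fps (f + g) = Abs_fps f + Abs_fps g" by (simp add: fps_eq_iff)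
    then show ?thesis by (simp add: seq_mult_def distrib_left fun_eq_iff)
  qed
  have scale: "seq_mult p (qscale c f) = qscale c (seq_mult p f)" for c f
  proof -
    have "Abs_fps (qscale c f) = fps_const c * Abs_fps f" by (simp add: fps_eq_iff qscale_def)
    then have "seq_mult p (qscale c f) = fps_nth (fps_const c * (p * Abs_fps f))"
      unfolding seq_mult_def by (simp only: mult.left_commute)
    then show ?thesis by (simp add: seq_mult_def qscale_def fun_eq_iff)
  qed
  show ?thesis
    unfolding Vector_Spaces.linear_iff using Q.vector_space_axioms add scale by blast
qed

lemma span_seq_mult: "Q.span (seq_mult p ` A) = seq_mult p ` Q.span A"
proof -
  interpret L: Vector_Spaces.linear qscale qscale "seq_mult p" by (rule linear_seq_mult)
  show ?thesis by (rule L.span_image)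
qed

lemma seq_mult_seq_mult: "seq_mult p (seq_mult q f) = seq_mult (p * q) f"
  by (simp add: seq_mult_def mult_ac fps_nth_inverse)

lemma inj_seq_mult:
  assumes "p $ 0 \<noteq> 0"
  shows "inj (seq_mult p)"
proof (rule injI)
  fix f g assume "seq_mult p f = seq_mult p g"
  then have "seq_mult (inverse p) (seq_mult p f) = seq_mult (inverse p) (seq_mult p g)" by simp
  then have "seq_mult 1 f = seq_mult 1 g"
    using inverse_mult_eq_1[OF assms] by (simp add: seq_mult_seq_mult)
  then show "f = g" by (simp add: seq_mult_def fun_eq_iff)
qed

definition unit_seq :: "nat \<Rightarrow> nat \<Rightarrow> rat" where
  "unit_seq i = (\<lambda>k. if k = i then 1 else 0)"

lemma inj_unit_seq: "inj unit_seq"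
  by (rule injI) (metis unit_seq_def zero_neq_one)

lemma unit_seq_add: "unit_seq (e + s) = unit_seq e - seq_mult (1 - fps_X ^ s) (unit_seq e)"
  by (auto simp: fun_eq_iff unit_seq_def seq_mult_def left_diff_distrib fps_X_power_mult_nth)

lemma sum_seq_apply: "(\<Sum>i\<in>A. g i) k = (\<Sum>i\<in>A. (g i k :: rat))"
  by (induction A rule: infinite_finite_induct) auto

lemma in_span_unit_seqs:
  assumes "\<And>k. k \<ge> n \<Longrightarrow> f k = 0"
  shows "f \<in> Q.span (unit_seq ` {..<n})"
proof -
  have "f = (\<Sum>i<n. qscale (f i) (unit_seq i))"
  proof
    fix k
    have "(\<Sum>i<n. qscale (f i) (unit_seq i)) k = (\<Sum>i<n. if i = k then f i else 0)"
      unfolding sum_seq_apply by (intro sum.cong) (auto simp: qscale_def unit_seq_def)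
    then show "f k = (\<Sum>i<n. qscale (f i) (unit_seq i)) k"
      using assms[of k] by (auto simp: not_le)
  qed
  also have "\<dots> \<in> Q.span (unit_seq ` {..<n})"
    by (intro Q.span_sum Q.span_scale Q.span_base) auto
  finally show ?thesis .
qed

lemma independent_unit_seqs: "Q.independent (unit_seq ` {..<n})"
proof
  assume "Q.dependent (unit_seq ` {..<n})"
  then obtain u where u: "\<exists>v\<in>unit_seq ` {..<n}. u v \<noteq> 0"
      "(\<Sum>v\<in>unit_seq ` {..<n}. qscale (u v) v) = 0"
    using Q.dependent_finite by blast
  then obtain i where i: "i < n" "u (unit_seq i) \<noteq> 0" by auto
  have "0 = (\<Sum>v\<in>unit_seq ` {..<n}. qscale (u v) v) i" using u(2) by simp
  also have "\<dots> = (\<Sum>j<n. u (unit_seq j) * unit_seq j i)"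
    by (simp add: sum_seq_apply sum.reindex inj_on_subset[OF inj_unit_seq] qscale_def)
  also have "\<dots> = (\<Sum>j<n. if j = i then u (unit_seq j) else 0)"
    by (intro sum.cong) (auto simp: unit_seq_def)
  also have "\<dots> = u (unit_seq i)" using i by simp
  finally show False using i by simp
qed

lemma dim_seq_mult_image:
  assumes "p $ 0 \<noteq> 0" "Q.span A = Q.span (unit_seq ` {..<n})"
  shows "Q.dim (seq_mult p ` A) = n"
proof -
  interpret L: Vector_Spaces.linear qscale qscale "seq_mult p" by (rule linear_seq_mult)
  have inj: "inj (seq_mult p)" using assms(1) by (rule inj_seq_mult)
  have "Q.dim (seq_mult p ` A) = Q.dim (Q.span (seq_mult p ` A))" by simp
  also have "Q.span (seq_mult p ` A) = Q.span (seq_mult p ` unit_seq ` {..<n})"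
    by (simp add: span_seq_mult assms(2))
  also have "Q.dim \<dots> = Q.dim (seq_mult p ` unit_seq ` {..<n})" by simp
  also have "\<dots> = card (seq_mult p ` unit_seq ` {..<n})"
    by (rule Q.dim_eq_card_independent, rule L.independent_injective_image)
       (use independent_unit_seqs inj_on_subset[OF inj] in auto)
  also have "\<dots> = n"
    using inj inj_unit_seq by (simp add: card_image inj_on_subset)
  finally show ?thesis .
qed

section \<open>The span of the products Q_T\<close>

definition product_seqs :: "nat set set \<Rightarrow> (nat \<Rightarrow> rat) set" where
  "product_seqs \<T> = (\<lambda>T. fps_nth (euler_prod T :: rat fps)) ` \<T>"

lemma product_seqs_mono: "\<T> \<subseteq> \<T>' \<Longrightarrow> product_seqs \<T> \<subseteq> product_seqs \<T>'"
  unfolding product_seqs_def by (rule image_mono)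

lemma seq_mult_product_seqs:
  assumes "\<And>T. T \<in> \<T> \<Longrightarrow> finite T \<and> s \<notin> T"
  shows "seq_mult (1 - fps_X ^ s) ` product_seqs \<T> = product_seqs (insert s ` \<T>)"
  using assms unfolding product_seqs_def image_image
  by (intro image_cong refl) (simp add: seq_mult_def euler_prod_def fps_nth_inverse)

lemma unit_seq_add_in_span:
  assumes "unit_seq e \<in> Q.span A" "A \<subseteq> B" "seq_mult (1 - fps_X ^ s) ` A \<subseteq> B"
  shows "unit_seq (e + s) \<in> Q.span B"
proof -
  have "unit_seq e \<in> Q.span B" using assms(1,2) Q.span_mono by blast
  moreover have "seq_mult (1 - fps_X ^ s) (unit_seq e) \<in> Q.span B"
    using assms(1) Q.span_mono[OF assms(3)] by (auto simp: span_seq_mult)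
  ultimately show ?thesis unfolding unit_seq_add by (rule Q.span_diff)
qed

lemma insert_Suc_subset: "T \<in> Pow {1..m} \<Longrightarrow> insert (Suc m) T \<in> Pow {1..Suc m}"
  by auto

lemma insert_Suc_proper:
  assumes "T \<in> Pow {1..m} - {{1..m}}"
  shows "insert (Suc m) T \<in> Pow {1..Suc m} - {{1..Suc m}}"
proof -
  have "{1..m} \<subseteq> T" if eq: "insert (Suc m) T = {1..Suc m}"
  proof
    fix y assume "y \<in> {1..m}"
    then have "y \<in> insert (Suc m) T" "y \<noteq> Suc m" unfolding eq by auto
    then show "y \<in> T" by simp
  qed
  then show ?thesis using assms by auto
qed

lemma Pow_sub_proper_Suc: "Pow {1..m} \<subseteq> Pow {1..Suc m} - {{1..Suc m}}"
proof
  fix T assume T: "T \<in> Pow {1..m}"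
  have "Suc m \<notin> T" using T by auto
  then show "T \<in> Pow {1..Suc m} - {{1..Suc m}}" using T by auto
qed

lemma seq_mult_all_products:
  "seq_mult (1 - fps_X ^ Suc m) ` product_seqs (Pow {1..m}) \<subseteq> product_seqs (Pow {1..Suc m})"
proof -
  have "seq_mult (1 - fps_X ^ Suc m) ` product_seqs (Pow {1..m}) =
          product_seqs (insert (Suc m) ` Pow {1..m})"
    by (rule seq_mult_product_seqs) (auto intro: finite_subset)
  also have "\<dots> \<subseteq> product_seqs (Pow {1..Suc m})"
    by (intro product_seqs_mono image_subsetI insert_Suc_subset)
  finally show ?thesis .
qed

lemma seq_mult_proper_products:
  "seq_mult (1 - fps_X ^ Suc m) ` product_seqs (Pow {1..m} - {{1..m}})
     \<subseteq> product_seqs (Pow {1..Suc m} - {{1..Suc m}})"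
proof -
  have "seq_mult (1 - fps_X ^ Suc m) ` product_seqs (Pow {1..m} - {{1..m}}) =
          product_seqs (insert (Suc m) ` (Pow {1..m} - {{1..m}}))"
    by (rule seq_mult_product_seqs) (auto intro: finite_subset)
  also have "\<dots> \<subseteq> product_seqs (Pow {1..Suc m} - {{1..Suc m}})"
    by (intro product_seqs_mono image_subsetI insert_Suc_proper)
  finally show ?thesis .
qed

lemma unit_seq_in_span_all:
  "d \<le> m * (m + 1) div 2 \<Longrightarrow> unit_seq d \<in> Q.span (product_seqs (Pow {1..m}))"
proof (induction m arbitrary: d)
  case 0
  then have "unit_seq d = fps_nth (euler_prod {} :: rat fps)"
    by (auto simp: euler_prod_def unit_seq_def fun_eq_iff)
  then show ?case unfolding product_seqs_def by (intro Q.span_base) auto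
next
  case (Suc m)
  have mono: "product_seqs (Pow {1..m}) \<subseteq> product_seqs (Pow {1..Suc m})"
    by (intro product_seqs_mono) auto
  show ?case
  proof (cases "d \<le> m * (m + 1) div 2")
    case True
    then show ?thesis using Suc.IH Q.span_mono[OF mono] by blast
  next
    case False
    define e where "e = d - Suc m"
    have "d = e + Suc m" "e \<le> m * (m + 1) div 2"
      using False Suc.prems triangle_Suc[of m] triangle_ge[of m] unfolding e_def by linarith+
    then show ?thesis
      using Suc.IH unit_seq_add_in_span mono seq_mult_all_products by metis
  qed
qed

lemma unit_seq_in_span_proper:
  "d < m * (m + 1) div 2 \<Longrightarrow> unit_seq d \<in> Q.span (product_seqs (Pow {1..m} - {{1..m}}))"
proof (induction m arbitrary: d)
  case 0
  then show ?case by simp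
next
  case (Suc m)
  have mono_all: "product_seqs (Pow {1..m}) \<subseteq> product_seqs (Pow {1..Suc m} - {{1..Suc m}})"
    by (intro product_seqs_mono Pow_sub_proper_Suc)
  then have mono: "product_seqs (Pow {1..m} - {{1..m}}) \<subseteq>
                     product_seqs (Pow {1..Suc m} - {{1..Suc m}})"
    using product_seqs_mono[of "Pow {1..m} - {{1..m}}" "Pow {1..m}"] by blast
  show ?case
  proof (cases "d \<le> m * (m + 1) div 2")
    case True
    then show ?thesis using unit_seq_in_span_all Q.span_mono[OF mono_all] by blast
  next
    case False
    define e where "e = d - Suc m"
    have "d = e + Suc m" "e < m * (m + 1) div 2"
      using False Suc.prems triangle_Suc[of m] triangle_ge[of m] unfolding e_def by linarith+
    then show ?thesis
      using Suc.IH unit_seq_add_in_span mono seq_mult_proper_products by metis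
  qed
qed

lemma span_proper_products:
  "Q.span (product_seqs (Pow {1..m} - {{1..m}})) = Q.span (unit_seq ` {..<m * (m + 1) div 2})"
proof (rule Q.span_eq[THEN iffD2], intro conjI subsetI)
  fix x assume "x \<in> product_seqs (Pow {1..m} - {{1..m}})"
  then obtain T where T: "T \<subseteq> {1..m}" "T \<noteq> {1..m}" "x = fps_nth (euler_prod T :: rat fps)"
    unfolding product_seqs_def by auto
  have "\<Sum>T < m * (m + 1) div 2"
    using sum_complement_lt[of "{1..m} - T" m] T(1,2) by (auto simp: double_diff)
  then show "x \<in> Q.span (unit_seq ` {..<m * (m + 1) div 2})"
    unfolding T(3) using T(1)
    by (intro in_span_unit_seqs euler_prod_nth_above_sum) (auto intro: finite_subset)
next
  fix x assume "x \<in> unit_seq ` {..<m * (m + 1) div 2}"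
  then show "x \<in> Q.span (product_seqs (Pow {1..m} - {{1..m}}))"
    using unit_seq_in_span_proper by auto
qed

section \<open>The rank\<close>

text \<open>Column S of P is 1/Q_[1,m] times the coefficient sequence of Q_([1,m]-S); so the
  columns are the image of the proper products under an invertible multiplication.\<close>
lemma columns_eq_image:
  "{P_column S | S. S \<subseteq> {1..m} \<and> S \<noteq> {}} =
     seq_mult (inverse (euler_prod {1..m})) ` product_seqs (Pow {1..m} - {{1..m}})"
proof -
  define D where "D = (euler_prod {1..m} :: rat fps)"
  have D0: "D $ 0 = 1" unfolding D_def by (rule euler_prod_nth_0) auto
  have column: "P_column S = seq_mult (inverse D) (fps_nth (euler_prod ({1..m} - S)))"
    if "S \<subseteq> {1..m}" for S
  proof -
    have "inverse D * D = 1" using D0 by (intro inverse_mult_eq_1) simp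
    then have "partition_fps S = inverse D * (D * partition_fps S)"
      by (simp add: mult.assoc[symmetric])
    also have "D * partition_fps S = euler_prod ({1..m} - S)"
      unfolding D_def by (rule euler_prod_times_partition_fps[OF that])
    finally have fps_eq: "partition_fps S = inverse D * euler_prod ({1..m} - S)" .
    have "P_column S = fps_nth (partition_fps S :: rat fps)"
      by (simp add: P_column_def partition_fps_def fun_eq_iff)
    then show ?thesis unfolding fps_eq by (simp add: seq_mult_def fps_nth_inverse)
  qed
  have "{P_column S | S. S \<subseteq> {1..m} \<and> S \<noteq> {}} =
          (\<lambda>T. P_column ({1..m} - T)) ` (Pow {1..m} - {{1..m}})"
  proof (intro equalityI subsetI)
    fix x assume "x \<in> {P_column S | S. S \<subseteq> {1..m} \<and> S \<noteq> {}}"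
    then obtain S where S: "S \<subseteq> {1..m}" "S \<noteq> {}" "x = P_column S" by blast
    then have "{1..m} - S \<in> Pow {1..m} - {{1..m}}" "x = P_column ({1..m} - ({1..m} - S))"
      by (auto simp: double_diff)
    then show "x \<in> (\<lambda>T. P_column ({1..m} - T)) ` (Pow {1..m} - {{1..m}})" by blast
  next
    fix x assume "x \<in> (\<lambda>T. P_column ({1..m} - T)) ` (Pow {1..m} - {{1..m}})"
    then obtain T where T: "T \<subseteq> {1..m}" "T \<noteq> {1..m}" "x = P_column ({1..m} - T)" by auto
    then have "{1..m} - T \<noteq> {}" by blast
    with T show "x \<in> {P_column S | S. S \<subseteq> {1..m} \<and> S \<noteq> {}}" by blast
  qed
  also have "\<dots> = seq_mult (inverse D) ` product_seqs (Pow {1..m} - {{1..m}})"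
    unfolding product_seqs_def image_image
    by (intro image_cong refl) (auto simp: column double_diff)
  finally show ?thesis unfolding D_def .
qed

lemma rank_P:
  "P_rank m = m * (m + 1) div 2"
proof -
  have "(euler_prod {1..m} :: rat fps) $ 0 = 1" by (rule euler_prod_nth_0) auto
  then have "(inverse (euler_prod {1..m}) :: rat fps) $ 0 \<noteq> 0" by simp
  then show ?thesis
    unfolding P_rank_def columns_eq_image by (intro dim_seq_mult_image span_proper_products)
qed

theorem theoremA:
  fixes m n :: nat
  assumes "m > 0" and "n = m * (m + 1) div 2"
  shows "P_rank m = n \<and>
    (\<forall>k S. k \<ge> n \<longrightarrow> S \<subseteq> {1..m} \<longrightarrow> S \<noteq> {} \<longrightarrow>
       int (part_count k S) =
         - (\<Sum>j = k - n..k - 1. coeff (cpoly m) (k - j) * int (part_count j S)))"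
proof (intro conjI allI impI)
  show "P_rank m = n" unfolding assms(2) by (rule rank_P)
next
  fix k S assume "k \<ge> n" "S \<subseteq> {1..m}" "S \<noteq> {}"
  then show "int (part_count k S) =
      - (\<Sum>j = k - n..k - 1. coeff (cpoly m) (k - j) * int (part_count j S))"
    by (rule partition_recurrence[OF assms])
qed

end
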